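(* For any integer $t\ge 2$ and any non-singleton lattices $L_1,\dots,L_t$ of finite breadth, $$\operatorname{br}(L_1\times\dots\times L_t)=\operatorname{br}(L_1)+\dots+\operatorname{br}(L_t).$$
   Context: The breadth $\operatorname{br}(L)$ of a lattice $L$ is the least positive integer $n$ such that every join $\bigvee_{i=1}^m x_i$ with $x_i\in L$ and $m\ge n$ equals the join of some $n$ of the joinands $x_i$. *)

theory Defs
  imports "HOL-Algebra.Lattice" "HOL-Library.FuncSet"
begin

text \<open>Lattices are HOL-Algebra lattices (locale lattice, with eq being equality).
  The join of the family x 0, ..., x (m-1) is the HOL-Algebra supremum of its set
  of values.\<close>

definition breadth_le :: "('a, 'b) gorder_scheme \<Rightarrow> nat \<Rightarrow> bool" where
  "breadth_le L n \<longleftrightarrow>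
     (\<forall>m \<ge> n. \<forall>x \<in> {..<m} \<rightarrow> carrier L.
        \<exists>I \<subseteq> {..<m}. card I = n \<and> \<Squnion>\<^bsub>L\<^esub> (x ` {..<m}) = \<Squnion>\<^bsub>L\<^esub> (x ` I))"

definition finite_breadth :: "('a, 'b) gorder_scheme \<Rightarrow> bool" where
  "finite_breadth L \<longleftrightarrow> (\<exists>n \<ge> 1. breadth_le L n)"

definition breadth :: "('a, 'b) gorder_scheme \<Rightarrow> nat" where
  "breadth L = (LEAST n. n \<ge> 1 \<and> breadth_le L n)"

definition prod_lattice :: "nat \<Rightarrow> (nat \<Rightarrow> ('a, 'b) gorder_scheme) \<Rightarrow> (nat \<Rightarrow> 'a) gorder" where
  "prod_lattice t L =
     \<lparr> carrier = (\<Pi>\<^sub>E i \<in> {..<t}. carrier (L i)),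
       eq = (=),
       le = (\<lambda>x y. \<forall>i < t. x i \<sqsubseteq>\<^bsub>L i\<^esub> y i) \<rparr>"

end

theory Submission
  imports Defs
begin

(* Call a family x over I join-irredundant over a base c if removing any single x j lowers
   the join of c with the family.  Such a family can never be longer than the breadth.  A lattice
   of breadth b >= 2 has one of length b (over the meet of its members), and a non-singleton lattice
   of breadth 1 has one of length 1.  Putting the family of the i-th factor into coordinate i and
   the bases into all other coordinates yields an irredundant family of length
   br(L_1) + ... + br(L_t) in the product.  Conversely, joins in the product are computed
   coordinatewise, so the union of the subfamilies chosen in the factors represents every join. *)

lemma (in partial_order) sup_eq_least:
  "least L s (Upper L A) \<Longrightarrow> \<Squnion>A = s"
  unfolding sup_def by (rule some_equality) (auto intro: least_unique)

context upper_semilattice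
begin

lemma finite_sup_upper:
  assumes "finite A" "A \<subseteq> carrier L" "a \<in> A"
  shows "a \<sqsubseteq> \<Squnion>A"
proof -
  have "A \<noteq> {}"
    using assms(3) by blast
  then show ?thesis
    using least_Upper_above[OF finite_sup_least[OF assms(1,2)]] assms(2,3) by blast
qed

lemma finite_sup_le:
  assumes "finite A" "A \<subseteq> carrier L" "A \<noteq> {}" "u \<in> carrier L" "\<And>a. a \<in> A \<Longrightarrow> a \<sqsubseteq> u"
  shows "\<Squnion>A \<sqsubseteq> u"
proof -
  have "u \<in> Upper L A"
    using assms(4,5) by (rule Upper_memI[rotated])
  then show ?thesis
    by (rule least_le[OF finite_sup_least[OF assms(1-3)]])
qed

lemma finite_sup_mono:
  assumes "finite A" "A \<subseteq> carrier L" "B \<subseteq> A" "B \<noteq> {}"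
  shows "\<Squnion>B \<sqsubseteq> \<Squnion>A"
proof (rule finite_sup_le)
  show "finite B" "B \<subseteq> carrier L"
    using assms(1-3) rev_finite_subset by blast+
  show "\<Squnion>A \<in> carrier L"
    using assms by (intro finite_sup_closed) auto
  show "b \<sqsubseteq> \<Squnion>A" if "b \<in> B" for b
    using that assms(1-3) by (intro finite_sup_upper) auto
qed (fact assms(4))

lemma finite_sup_sandwich:
  assumes "finite A" "A \<subseteq> carrier L" "J \<subseteq> B" "B \<subseteq> A" "J \<noteq> {}" "\<Squnion>J = \<Squnion>A"
  shows "\<Squnion>B = \<Squnion>A"
proof (rule le_antisym)
  have B: "finite B" "B \<subseteq> carrier L" "B \<noteq> {}"
    using assms rev_finite_subset by blast+
  then show "\<Squnion>A \<sqsubseteq> \<Squnion>B"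
    using finite_sup_mono[OF B(1,2) assms(3,5)] assms(6) by simp
  show "\<Squnion>B \<sqsubseteq> \<Squnion>A"
    using finite_sup_mono[OF assms(1,2,4) B(3)] .
  show "\<Squnion>B \<in> carrier L"
    using B by (rule finite_sup_closed)
  show "\<Squnion>A \<in> carrier L"
    using assms B(3) by (intro finite_sup_closed) auto
qed

lemma finite_sup_insert_below:
  assumes "finite A" "A \<subseteq> carrier L" "A \<noteq> {}" "c \<in> carrier L" "c \<sqsubseteq> \<Squnion>A"
  shows "\<Squnion>(insert c A) = \<Squnion>A"
proof (rule le_antisym)
  show "\<Squnion>A \<in> carrier L"
    using assms(1-3) by (rule finite_sup_closed)
  then show "\<Squnion>(insert c A) \<sqsubseteq> \<Squnion>A"
    using assms by (intro finite_sup_le) (auto intro: finite_sup_upper)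
  show "\<Squnion>A \<sqsubseteq> \<Squnion>(insert c A)"
    using assms by (intro finite_sup_mono) auto
  show "\<Squnion>(insert c A) \<in> carrier L"
    using assms by (intro finite_sup_closed) auto
qed

end

lemma carrier_prod_lattice [simp]:
  "carrier (prod_lattice t L) = (\<Pi>\<^sub>E i\<in>{..<t}. carrier (L i))"
  by (simp add: prod_lattice_def)

lemma eq_prod_lattice [simp]: "eq (prod_lattice t L) = (=)"
  by (simp add: prod_lattice_def)

lemma le_prod_lattice [simp]:
  "x \<sqsubseteq>\<^bsub>prod_lattice t L\<^esub> y \<longleftrightarrow> (\<forall>i<t. x i \<sqsubseteq>\<^bsub>L i\<^esub> y i)"
  by (simp add: prod_lattice_def)

lemma partial_order_prod_lattice:
  assumes "\<And>i. i < t \<Longrightarrow> partial_order (L i)"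
  shows "partial_order (prod_lattice t L)"
proof unfold_locales
  fix x y z
  assume "x \<in> carrier (prod_lattice t L)" "y \<in> carrier (prod_lattice t L)"
    "z \<in> carrier (prod_lattice t L)"
  then have carrier: "x i \<in> carrier (L i)" "y i \<in> carrier (L i)" "z i \<in> carrier (L i)"
    if "i < t" for i
    using that by (auto simp: PiE_iff)
  show "x \<sqsubseteq>\<^bsub>prod_lattice t L\<^esub> x"
  proof -
    have "x i \<sqsubseteq>\<^bsub>L i\<^esub> x i" if "i < t" for i
    proof -
      interpret partial_order "L i"
        using assms that .
      show ?thesis
        using carrier that by simp
    qed
    then show ?thesis
      by simp
  qed
  show "x \<sqsubseteq>\<^bsub>prod_lattice t L\<^esub> z"
    if "x \<sqsubseteq>\<^bsub>prod_lattice t L\<^esub> y" "y \<sqsubseteq>\<^bsub>prod_lattice t L\<^esub> z"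
  proof -
    have "x i \<sqsubseteq>\<^bsub>L i\<^esub> z i" if "i < t" for i
    proof -
      interpret partial_order "L i"
        using assms that .
      show ?thesis
        using \<open>x \<sqsubseteq>\<^bsub>prod_lattice t L\<^esub> y\<close> \<open>y \<sqsubseteq>\<^bsub>prod_lattice t L\<^esub> z\<close> carrier that
        by (auto intro: le_trans)
    qed
    then show ?thesis
      by simp
  qed
  show "x .=\<^bsub>prod_lattice t L\<^esub> y"
    if "x \<sqsubseteq>\<^bsub>prod_lattice t L\<^esub> y" "y \<sqsubseteq>\<^bsub>prod_lattice t L\<^esub> x"
  proof -
    have "x i = y i" if "i < t" for i
    proof -
      interpret partial_order "L i"
        using assms that .
      show ?thesis
        using \<open>x \<sqsubseteq>\<^bsub>prod_lattice t L\<^esub> y\<close> \<open>y \<sqsubseteq>\<^bsub>prod_lattice t L\<^esub> x\<close> carrier that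
        by (auto intro: le_antisym)
    qed
    then show ?thesis
      using \<open>x \<in> carrier (prod_lattice t L)\<close> \<open>y \<in> carrier (prod_lattice t L)\<close>
      by (auto intro: PiE_ext)
  qed
qed simp_all

lemma prod_lattice_least_Upper:
  assumes L: "\<And>i. i < t \<Longrightarrow> upper_semilattice (L i)"
    and A: "finite A" "A \<subseteq> carrier (prod_lattice t L)" "A \<noteq> {}"
  shows "least (prod_lattice t L) (\<lambda>i\<in>{..<t}. \<Squnion>\<^bsub>L i\<^esub> ((\<lambda>f. f i) ` A)) (Upper (prod_lattice t L) A)"
proof (rule least_UpperI)
  have proj: "finite ((\<lambda>f. f i) ` A)" "(\<lambda>f. f i) ` A \<subseteq> carrier (L i)" "(\<lambda>f. f i) ` A \<noteq> {}"
    if "i < t" for i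
    using A that by (auto simp: PiE_iff)
  have "\<Squnion>\<^bsub>L i\<^esub> ((\<lambda>f. f i) ` A) \<in> carrier (L i)" if "i < t" for i
  proof -
    interpret upper_semilattice "L i"
      using L that .
    show ?thesis
      using proj that by simp
  qed
  then show "(\<lambda>i\<in>{..<t}. \<Squnion>\<^bsub>L i\<^esub> ((\<lambda>f. f i) ` A)) \<in> carrier (prod_lattice t L)"
    by simp
  show "f \<sqsubseteq>\<^bsub>prod_lattice t L\<^esub> (\<lambda>i\<in>{..<t}. \<Squnion>\<^bsub>L i\<^esub> ((\<lambda>f. f i) ` A))"
    if "f \<in> A" for f
  proof -
    have "f i \<sqsubseteq>\<^bsub>L i\<^esub> \<Squnion>\<^bsub>L i\<^esub> ((\<lambda>f. f i) ` A)" if "i < t" for i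
      using upper_semilattice.finite_sup_upper[OF L[OF that] proj(1,2)[OF that]] \<open>f \<in> A\<close> by blast
    then show ?thesis
      by simp
  qed
  show "(\<lambda>i\<in>{..<t}. \<Squnion>\<^bsub>L i\<^esub> ((\<lambda>f. f i) ` A)) \<sqsubseteq>\<^bsub>prod_lattice t L\<^esub> u"
    if "u \<in> Upper (prod_lattice t L) A" for u
  proof -
    have u: "u \<in> carrier (prod_lattice t L)"
      using that by (rule subsetD[OF Upper_closed])
    have "\<Squnion>\<^bsub>L i\<^esub> ((\<lambda>f. f i) ` A) \<sqsubseteq>\<^bsub>L i\<^esub> u i" if "i < t" for i
    proof (rule upper_semilattice.finite_sup_le[OF L[OF that] proj[OF that]])
      show "u i \<in> carrier (L i)"
        using u that by (auto simp: PiE_iff)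
      show "a \<sqsubseteq>\<^bsub>L i\<^esub> u i" if "a \<in> (\<lambda>f. f i) ` A" for a
        using \<open>u \<in> Upper (prod_lattice t L) A\<close> \<open>a \<in> (\<lambda>f. f i) ` A\<close> \<open>i < t\<close> A(2)
        by (auto simp: Upper_def)
    qed
    then show ?thesis
      by simp
  qed
qed (fact A(2))

lemma upper_semilattice_prod_lattice:
  assumes L: "\<And>i. i < t \<Longrightarrow> upper_semilattice (L i)"
  shows "upper_semilattice (prod_lattice t L)"
proof (intro upper_semilattice.intro upper_semilattice_axioms.intro)
  show "partial_order (prod_lattice t L)"
    using L upper_semilattice.axioms(1) by (blast intro: partial_order_prod_lattice)
  fix x y
  assume "x \<in> carrier (prod_lattice t L)" "y \<in> carrier (prod_lattice t L)"
  then show "\<exists>s. least (prod_lattice t L) s (Upper (prod_lattice t L) {x, y})"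
    using L prod_lattice_least_Upper[of t L "{x, y}"] by auto
qed

lemma prod_lattice_finite_sup:
  assumes "\<And>i. i < t \<Longrightarrow> upper_semilattice (L i)"
    and "finite A" "A \<subseteq> carrier (prod_lattice t L)" "A \<noteq> {}"
  shows "\<Squnion>\<^bsub>prod_lattice t L\<^esub> A = (\<lambda>i\<in>{..<t}. \<Squnion>\<^bsub>L i\<^esub> ((\<lambda>f. f i) ` A))"
proof -
  interpret upper_semilattice "prod_lattice t L"
    using assms(1) by (rule upper_semilattice_prod_lattice)
  show ?thesis
    using assms by (intro sup_eq_least prod_lattice_least_Upper)
qed

lemma finite_breadthI: "1 \<le> n \<Longrightarrow> breadth_le L n \<Longrightarrow> finite_breadth L"
  unfolding finite_breadth_def by blast

lemma
  assumes "finite_breadth L"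
  shows breadth_ge_1: "1 \<le> breadth L" and breadth_le_breadth: "breadth_le L (breadth L)"
proof -
  have "1 \<le> breadth L \<and> breadth_le L (breadth L)"
    using assms unfolding finite_breadth_def breadth_def by (rule LeastI_ex)
  then show "1 \<le> breadth L" "breadth_le L (breadth L)"
    by auto
qed

lemma breadth_least: "1 \<le> n \<Longrightarrow> breadth_le L n \<Longrightarrow> breadth L \<le> n"
  unfolding breadth_def by (rule Least_le) simp

lemma breadth_leD:
  assumes "breadth_le L n" "finite K" "n \<le> card K" "y \<in> K \<rightarrow> carrier L"
  obtains J where "J \<subseteq> K" "card J = n" "\<Squnion>\<^bsub>L\<^esub> (y ` K) = \<Squnion>\<^bsub>L\<^esub> (y ` J)"
proof -
  obtain h where h: "bij_betw h {..<card K} K"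
    using ex_bij_betw_nat_finite[OF assms(2)] by (auto simp: atLeast0LessThan)
  have "h k \<in> K" if "k < card K" for k
    using h that by (auto simp: bij_betw_def)
  then have "y \<circ> h \<in> {..<card K} \<rightarrow> carrier L"
    using assms(4) by auto
  then obtain J where J: "J \<subseteq> {..<card K}" "card J = n"
    and "\<Squnion>\<^bsub>L\<^esub> ((y \<circ> h) ` {..<card K}) = \<Squnion>\<^bsub>L\<^esub> ((y \<circ> h) ` J)"
    using assms(1,3) unfolding breadth_le_def by blast
  moreover have "y ` K = (y \<circ> h) ` {..<card K}"
    using bij_betw_imp_surj_on[OF h] by (metis image_comp)
  ultimately have "\<Squnion>\<^bsub>L\<^esub> (y ` K) = \<Squnion>\<^bsub>L\<^esub> (y ` h ` J)"
    by (simp add: image_comp)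
  moreover have "h ` J \<subseteq> K" "card (h ` J) = n"
    using J h by (auto simp: bij_betw_def card_image inj_on_subset)
  ultimately show ?thesis
    using that by blast
qed

definition join_irredundant :: "('a, 'b) gorder_scheme \<Rightarrow> 'a \<Rightarrow> ('i \<Rightarrow> 'a) \<Rightarrow> 'i set \<Rightarrow> bool" where
  "join_irredundant L c x I \<longleftrightarrow> c \<in> carrier L \<and> x \<in> I \<rightarrow> carrier L \<and>
     (\<forall>j\<in>I. \<Squnion>\<^bsub>L\<^esub> (insert c (x ` (I - {j}))) \<noteq> \<Squnion>\<^bsub>L\<^esub> (insert c (x ` I)))"

context upper_semilattice
begin

lemma join_irredundant_card_le:
  assumes breadth: "breadth_le L n" "1 \<le> n" and "finite I" and irr: "join_irredundant L c x I"
  shows "card I \<le> n"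
proof (rule ccontr)
  assume "\<not> card I \<le> n"
  define K where "K = insert None (Some ` I)"
  define y where "y = case_option c x"
  have y_K: "y ` K = insert c (x ` I)"
    by (auto simp: K_def y_def image_image)
  have K: "finite K" "card K = Suc (card I)"
    using \<open>finite I\<close> by (auto simp: K_def card_image)
  have carrier_all: "insert c (x ` I) \<subseteq> carrier L"
    using irr by (auto simp: join_irredundant_def)
  then have "y \<in> K \<rightarrow> carrier L"
    unfolding image_subset_iff_funcset[symmetric] y_K .
  moreover have "n \<le> card K"
    using \<open>\<not> card I \<le> n\<close> K(2) by simp
  ultimately obtain J where J: "J \<subseteq> K" "card J = n" and "\<Squnion>(y ` K) = \<Squnion>(y ` J)"
    using breadth_leD[OF breadth(1) K(1)] by metis
  then have sup_J: "\<Squnion>(y ` J) = \<Squnion>(insert c (x ` I))"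
    by (simp add: y_K)
  have "\<not> Some ` I \<subseteq> J"
  proof
    assume "Some ` I \<subseteq> J"
    then have "card (Some ` I) \<le> card J"
      using J(1) K(1) by (intro card_mono) (auto intro: finite_subset)
    then show False
      using \<open>\<not> card I \<le> n\<close> J(2) by (simp add: card_image)
  qed
  then obtain j where j: "j \<in> I" "Some j \<notin> J"
    by blast
  have "\<Squnion>(insert c (x ` (I - {j}))) = \<Squnion>(insert c (x ` I))"
  proof (rule finite_sup_sandwich[OF _ carrier_all _ _ _ sup_J])
    show "finite (insert c (x ` I))"
      using \<open>finite I\<close> by simp
    show "y ` J \<subseteq> insert c (x ` (I - {j}))"
    proof
      fix z
      assume "z \<in> y ` J"
      then obtain k where k: "k \<in> J" "z = y k"
        by blast
      with J(1) have "k \<in> K"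
        by blast
      with k j(2) show "z \<in> insert c (x ` (I - {j}))"
        by (cases k) (auto simp: K_def y_def)
    qed
    show "insert c (x ` (I - {j})) \<subseteq> insert c (x ` I)"
      by blast
    show "y ` J \<noteq> {}"
      using J(2) breadth(2) by auto
  qed
  then show False
    using irr j(1) unfolding join_irredundant_def by blast
qed

end

lemma (in upper_semilattice) irredundant_family_of_breadth:
  assumes "finite_breadth L" "2 \<le> breadth L"
  obtains x :: "nat \<Rightarrow> 'a" and I where "finite I" "card I = breadth L" "x \<in> I \<rightarrow> carrier L"
    "\<And>j. j \<in> I \<Longrightarrow> \<Squnion>(x ` (I - {j})) \<noteq> \<Squnion>(x ` I)"
proof -
  have "\<not> breadth_le L (breadth L - 1)"
  proof
    assume "breadth_le L (breadth L - 1)"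
    then have "breadth L \<le> breadth L - 1"
      using assms(2) by (intro breadth_least) auto
    then show False
      using assms(2) by simp
  qed
  then obtain m x where m: "breadth L - 1 \<le> m" and x: "x \<in> {..<m} \<rightarrow> carrier L"
    and no_smaller: "\<And>J. J \<subseteq> {..<m} \<Longrightarrow> card J = breadth L - 1 \<Longrightarrow> \<Squnion>(x ` {..<m}) \<noteq> \<Squnion>(x ` J)"
    unfolding breadth_le_def by blast
  have "breadth L \<le> m"
    using m no_smaller[of "{..<m}"] by fastforce
  then obtain I where I: "I \<subseteq> {..<m}" "card I = breadth L" "\<Squnion>(x ` {..<m}) = \<Squnion>(x ` I)"
    using x breadth_le_breadth[OF assms(1)] unfolding breadth_le_def by blast
  show ?thesis
  proof
    show "finite I" "card I = breadth L" "x \<in> I \<rightarrow> carrier L"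
      using I x finite_subset by auto
    show "\<Squnion>(x ` (I - {j})) \<noteq> \<Squnion>(x ` I)" if "j \<in> I" for j
    proof -
      have "I - {j} \<subseteq> {..<m}" "card (I - {j}) = breadth L - 1"
        using I(1,2) that \<open>finite I\<close> by auto
      then show ?thesis
        using no_smaller I(3) by metis
    qed
  qed
qed

lemma (in lattice) join_irredundant_Inf:
  assumes "finite I" "2 \<le> card I" "x \<in> I \<rightarrow> carrier L"
    and irr: "\<And>j. j \<in> I \<Longrightarrow> \<Squnion>(x ` (I - {j})) \<noteq> \<Squnion>(x ` I)"
  shows "join_irredundant L (\<Sqinter>(x ` I)) x I"
proof -
  have xI: "finite (x ` I)" "x ` I \<subseteq> carrier L" "x ` I \<noteq> {}"
    using assms by auto
  then have glb: "greatest L (\<Sqinter>(x ` I)) (Lower L (x ` I))"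
    by (rule finite_inf_greatest)
  have c: "\<Sqinter>(x ` I) \<in> carrier L" "\<And>j. j \<in> I \<Longrightarrow> \<Sqinter>(x ` I) \<sqsubseteq> x j"
    using greatest_closed[OF glb] greatest_Lower_below[OF glb _ xI(2)] by auto
  have absorb: "\<Squnion>(insert (\<Sqinter>(x ` I)) (x ` B)) = \<Squnion>(x ` B)" if B: "B \<subseteq> I" "B \<noteq> {}" for B
  proof -
    obtain j where j: "j \<in> B" using B by blast
    have "finite B"
      using B(1) assms(1) by (rule finite_subset)
    then have xB: "finite (x ` B)" "x ` B \<subseteq> carrier L" "x ` B \<noteq> {}"
      using B assms(3) by auto
    have "\<Sqinter>(x ` I) \<sqsubseteq> x j" "x j \<sqsubseteq> \<Squnion>(x ` B)" "x j \<in> carrier L"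
      using c(2) finite_sup_upper[OF xB(1,2)] j B xB(2) by auto
    then have "\<Sqinter>(x ` I) \<sqsubseteq> \<Squnion>(x ` B)"
      using le_trans c(1) finite_sup_closed[OF xB] by blast
    then show ?thesis
      by (rule finite_sup_insert_below[OF xB c(1)])
  qed
  have "I - {j} \<noteq> {}" for j
  proof
    assume "I - {j} = {}"
    then have "card I \<le> card {j}"
      using card_mono[of "{j}" I] by blast
    then show False
      using assms(2) by simp
  qed
  moreover have "I \<noteq> {}"
    using assms(2) by auto
  ultimately show ?thesis
    using irr c(1) assms(3) absorb[OF Diff_subset] absorb[OF subset_refl]
    by (simp add: join_irredundant_def)
qed

lemma (in upper_semilattice) join_irredundant_singleton:
  assumes "u \<in> carrier L" "v \<in> carrier L" "\<not> v \<sqsubseteq> u"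
  shows "join_irredundant L u (\<lambda>_. v) {j}"
proof -
  have "\<Squnion>{u} = u"
    using assms(1) sup_eq_least sup_of_singletonI by blast
  moreover have "v \<sqsubseteq> \<Squnion>{u, v}"
    using assms by (intro finite_sup_upper) auto
  ultimately show ?thesis
    using assms by (auto simp: join_irredundant_def)
qed

lemma (in lattice) join_irredundant_of_breadth:
  assumes "\<exists>u\<in>carrier L. \<exists>v\<in>carrier L. u \<noteq> v" "finite_breadth L"
  obtains c and x :: "nat \<Rightarrow> 'a" and I where "finite I" "card I = breadth L" "join_irredundant L c x I"
proof (cases "breadth L = 1")
  case True
  obtain u v where "u \<in> carrier L" "v \<in> carrier L" "\<not> v \<sqsubseteq> u"
    using assms(1) le_antisym by blast
  show ?thesis
  proof (rule that)
    show "finite {0::nat}" "card {0::nat} = breadth L"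
      using True by simp_all
    show "join_irredundant L u (\<lambda>_. v) {0::nat}"
      by (rule join_irredundant_singleton) fact+
  qed
next
  case False
  then have "2 \<le> breadth L"
    using breadth_ge_1[OF assms(2)] by auto
  then show ?thesis
  proof (rule irredundant_family_of_breadth[OF assms(2)])
    fix x :: "nat \<Rightarrow> 'a" and I
    assume I: "finite I" "card I = breadth L"
      and x: "x \<in> I \<rightarrow> carrier L" "\<And>j. j \<in> I \<Longrightarrow> \<Squnion>(x ` (I - {j})) \<noteq> \<Squnion>(x ` I)"
    have "join_irredundant L (\<Sqinter>(x ` I)) x I"
      using I \<open>2 \<le> breadth L\<close> x by (intro join_irredundant_Inf) simp_all
    with I show ?thesis
      by (rule that)
  qed
qed

lemma prod_lattice_join_irredundant:
  assumes L: "\<And>i. i < t \<Longrightarrow> upper_semilattice (L i)"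
    and fin: "\<And>i. i < t \<Longrightarrow> finite (I i)"
    and irr: "\<And>i. i < t \<Longrightarrow> join_irredundant (L i) (c i) (x i) (I i)"
  shows "join_irredundant (prod_lattice t L) (\<lambda>k\<in>{..<t}. c k)
           (\<lambda>(i, j). \<lambda>k\<in>{..<t}. if k = i then x i j else c k) (SIGMA i:{..<t}. I i)"
    (is "join_irredundant ?P ?c ?e ?Q")
proof -
  have elems: "c k \<in> carrier (L k)" "j \<in> I k \<Longrightarrow> x k j \<in> carrier (L k)" if "k < t" for k j
    using irr[OF that] by (auto simp: join_irredundant_def)
  have carrier: "?c \<in> carrier ?P" "?e \<in> ?Q \<rightarrow> carrier ?P"
  proof -
    show "?c \<in> carrier ?P"
      using elems by simp
    show "?e \<in> ?Q \<rightarrow> carrier ?P"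
    proof
      fix q
      assume "q \<in> ?Q"
      then obtain i j where "q = (i, j)" "i < t" "j \<in> I i"
        by blast
      then show "?e q \<in> carrier ?P"
        using elems by (simp add: restrict_PiE_iff)
    qed
  qed
  have proj: "(\<lambda>f. f i) ` insert ?c (?e ` R) = insert (c i) (x i ` (R `` {i}))"
    if "i < t" for R i
  proof (intro equalityI subsetI)
    fix a
    assume "a \<in> (\<lambda>f. f i) ` insert ?c (?e ` R)"
    then show "a \<in> insert (c i) (x i ` (R `` {i}))"
      using \<open>i < t\<close> by (auto simp: Image_def)
  next
    fix a
    assume "a \<in> insert (c i) (x i ` (R `` {i}))"
    then consider "a = c i" | j where "(i, j) \<in> R" "a = x i j"
      by (auto simp: Image_def)
    then show "a \<in> (\<lambda>f. f i) ` insert ?c (?e ` R)"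
    proof cases
      case 1
      then show ?thesis
        using \<open>i < t\<close> by (intro rev_image_eqI[of ?c]) auto
    next
      case 2
      then show ?thesis
        using \<open>i < t\<close> by (intro rev_image_eqI[of "?e (i, j)"]) auto
    qed
  qed
  have sup_proj: "(\<Squnion>\<^bsub>?P\<^esub> (insert ?c (?e ` R))) i = \<Squnion>\<^bsub>L i\<^esub> (insert (c i) (x i ` (R `` {i})))"
    if "R \<subseteq> ?Q" "i < t" for R i
  proof -
    have "finite ?Q"
      using fin by auto
    with \<open>R \<subseteq> ?Q\<close> have "finite R"
      by (rule finite_subset)
    moreover have "insert ?c (?e ` R) \<subseteq> carrier ?P"
      using carrier \<open>R \<subseteq> ?Q\<close> by blast
    ultimately show ?thesis
      using prod_lattice_finite_sup[OF L, where A = "insert ?c (?e ` R)"] proj[OF \<open>i < t\<close>] \<open>i < t\<close> by simp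
  qed
  have "\<Squnion>\<^bsub>?P\<^esub> (insert ?c (?e ` (?Q - {q}))) \<noteq> \<Squnion>\<^bsub>?P\<^esub> (insert ?c (?e ` ?Q))"
    if "q \<in> ?Q" for q
  proof
    obtain i j where q: "q = (i, j)" "i < t" "j \<in> I i"
      using \<open>q \<in> ?Q\<close> by blast
    assume "\<Squnion>\<^bsub>?P\<^esub> (insert ?c (?e ` (?Q - {q}))) = \<Squnion>\<^bsub>?P\<^esub> (insert ?c (?e ` ?Q))"
    then have "\<Squnion>\<^bsub>L i\<^esub> (insert (c i) (x i ` ((?Q - {q}) `` {i}))) = \<Squnion>\<^bsub>L i\<^esub> (insert (c i) (x i ` (?Q `` {i})))"
      using sup_proj[of "?Q - {q}" i] sup_proj[of ?Q i] \<open>i < t\<close> by auto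
    moreover have "(?Q - {q}) `` {i} = I i - {j}" "?Q `` {i} = I i"
      using q by auto
    ultimately show False
      using irr[OF \<open>i < t\<close>] \<open>j \<in> I i\<close> by (simp add: join_irredundant_def)
  qed
  with carrier show ?thesis
    by (simp add: join_irredundant_def)
qed

lemma (in upper_semilattice) breadth_leI:
  assumes small: "\<And>m x. n \<le> m \<Longrightarrow> x \<in> {..<m} \<rightarrow> carrier L \<Longrightarrow>
       \<exists>J\<subseteq>{..<m}. J \<noteq> {} \<and> card J \<le> n \<and> \<Squnion>(x ` {..<m}) = \<Squnion>(x ` J)"
  shows "breadth_le L n"
  unfolding breadth_le_def
proof (intro allI impI ballI)
  fix m x
  assume m: "n \<le> m" and x: "x \<in> {..<m} \<rightarrow> carrier L"
  obtain J where J: "J \<subseteq> {..<m}" "J \<noteq> {}" "card J \<le> n" and sup_J: "\<Squnion>(x ` {..<m}) = \<Squnion>(x ` J)"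
    using small[OF m x] by blast
  have "finite J"
    using J(1) by (rule finite_subset) simp
  have "n - card J \<le> card ({..<m} - J)"
    using J(1) m \<open>finite J\<close> by (simp add: card_Diff_subset)
  then obtain K where K: "K \<subseteq> {..<m} - J" "card K = n - card J" "finite K"
    by (rule obtain_subset_with_card_n)
  have JK: "J \<union> K \<subseteq> {..<m}"
    using J(1) K(1) by blast
  show "\<exists>I\<subseteq>{..<m}. card I = n \<and> \<Squnion>(x ` {..<m}) = \<Squnion>(x ` I)"
  proof (intro exI conjI)
    show "J \<union> K \<subseteq> {..<m}"
      by (fact JK)
    have "J \<inter> K = {}"
      using K(1) by blast
    then show "card (J \<union> K) = n"
      using \<open>finite J\<close> K(2,3) J(3) by (simp add: card_Un_disjoint)
    have "\<Squnion>(x ` (J \<union> K)) = \<Squnion>(x ` {..<m})"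
    proof (rule finite_sup_sandwich[OF _ _ _ _ _ sup_J[symmetric]])
      show "finite (x ` {..<m})" "x ` {..<m} \<subseteq> carrier L"
        using x by auto
      show "x ` J \<subseteq> x ` (J \<union> K)" "x ` (J \<union> K) \<subseteq> x ` {..<m}" "x ` J \<noteq> {}"
        using JK J(2) by auto
    qed
    then show "\<Squnion>(x ` {..<m}) = \<Squnion>(x ` (J \<union> K))"
      by simp
  qed
qed

lemma prod_lattice_breadth_le:
  assumes "0 < t" and L: "\<And>i. i < t \<Longrightarrow> upper_semilattice (L i)"
    and n: "\<And>i. i < t \<Longrightarrow> 1 \<le> n i" "\<And>i. i < t \<Longrightarrow> breadth_le (L i) (n i)"
  shows "breadth_le (prod_lattice t L) (\<Sum>i<t. n i)"
proof (rule upper_semilattice.breadth_leI)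
  show "upper_semilattice (prod_lattice t L)"
    using L by (rule upper_semilattice_prod_lattice)
  fix m and x :: "nat \<Rightarrow> nat \<Rightarrow> 'a"
  assume m: "(\<Sum>i<t. n i) \<le> m" and x: "x \<in> {..<m} \<rightarrow> carrier (prod_lattice t L)"
  have x_i: "(\<lambda>k. x k i) \<in> {..<m} \<rightarrow> carrier (L i)" if "i < t" for i
    using x that by (auto simp: PiE_iff)
  have "\<exists>J. J \<subseteq> {..<m} \<and> card J = n i \<and>
      \<Squnion>\<^bsub>L i\<^esub> ((\<lambda>k. x k i) ` {..<m}) = \<Squnion>\<^bsub>L i\<^esub> ((\<lambda>k. x k i) ` J)" if "i < t" for i
  proof -
    have "n i \<le> (\<Sum>i<t. n i)"
      using that by (intro member_le_sum) auto
    then show ?thesis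
      using n(2)[OF that] x_i[OF that] m unfolding breadth_le_def by simp
  qed
  then obtain J where J: "\<And>i. i < t \<Longrightarrow> J i \<subseteq> {..<m}" "\<And>i. i < t \<Longrightarrow> card (J i) = n i"
    and sup_J: "\<And>i. i < t \<Longrightarrow>
      \<Squnion>\<^bsub>L i\<^esub> ((\<lambda>k. x k i) ` {..<m}) = \<Squnion>\<^bsub>L i\<^esub> ((\<lambda>k. x k i) ` J i)"
    by metis
  define U where "U = (\<Union>i<t. J i)"
  have "J 0 \<noteq> {}"
    using J(2)[OF assms(1)] n(1)[OF assms(1)] by auto
  then have U: "U \<subseteq> {..<m}" "U \<noteq> {}"
    using J(1) assms(1) by (auto simp: U_def)
  have "card U \<le> (\<Sum>i<t. card (J i))"
    unfolding U_def by (rule card_UN_le) simp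
  also have "\<dots> = (\<Sum>i<t. n i)"
    using J(2) by simp
  finally have "card U \<le> (\<Sum>i<t. n i)" .
  moreover have "\<Squnion>\<^bsub>prod_lattice t L\<^esub> (x ` {..<m}) = \<Squnion>\<^bsub>prod_lattice t L\<^esub> (x ` U)"
  proof -
    have sup_eq: "\<Squnion>\<^bsub>prod_lattice t L\<^esub> (x ` B) = (\<lambda>i\<in>{..<t}. \<Squnion>\<^bsub>L i\<^esub> ((\<lambda>k. x k i) ` B))"
      if "B \<subseteq> {..<m}" "B \<noteq> {}" for B
    proof -
      have "finite B"
        using that(1) by (rule finite_subset) simp
      moreover have "x ` B \<subseteq> carrier (prod_lattice t L)"
        using that(1) x by auto
      ultimately show ?thesis
        using that prod_lattice_finite_sup[OF L, where A = "x ` B"] by (simp add: image_image)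
    qed
    have coord: "\<Squnion>\<^bsub>L i\<^esub> ((\<lambda>k. x k i) ` U) = \<Squnion>\<^bsub>L i\<^esub> ((\<lambda>k. x k i) ` {..<m})" if "i < t" for i
    proof (rule upper_semilattice.finite_sup_sandwich[OF L[OF that] _ _ _ _ _ sup_J[OF that, symmetric]])
      show "finite ((\<lambda>k. x k i) ` {..<m})" "(\<lambda>k. x k i) ` {..<m} \<subseteq> carrier (L i)"
        using x_i[OF that] by auto
      show "(\<lambda>k. x k i) ` J i \<subseteq> (\<lambda>k. x k i) ` U" "(\<lambda>k. x k i) ` U \<subseteq> (\<lambda>k. x k i) ` {..<m}"
        using that U(1) by (auto simp: U_def)
      show "(\<lambda>k. x k i) ` J i \<noteq> {}"
        using J(2)[OF that] n(1)[OF that] by auto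
    qed
    have "{..<m} \<noteq> {}"
      using U by blast
    then show ?thesis
      using sup_eq[of "{..<m}"] sup_eq[OF U] coord by (simp cong: restrict_cong)
  qed
  ultimately show "\<exists>J\<subseteq>{..<m}. J \<noteq> {} \<and> card J \<le> (\<Sum>i<t. n i) \<and>
      \<Squnion>\<^bsub>prod_lattice t L\<^esub> (x ` {..<m}) = \<Squnion>\<^bsub>prod_lattice t L\<^esub> (x ` J)"
    using U by blast
qed

lemma finite_breadth_prod_lattice:
  assumes "0 < t" and L: "\<And>i. i < t \<Longrightarrow> upper_semilattice (L i)"
    and fin: "\<And>i. i < t \<Longrightarrow> finite_breadth (L i)"
  shows "finite_breadth (prod_lattice t L)"
    and "breadth (prod_lattice t L) \<le> (\<Sum>i<t. breadth (L i))"
proof -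
  have upper: "breadth_le (prod_lattice t L) (\<Sum>i<t. breadth (L i))"
    using assms breadth_ge_1 breadth_le_breadth by (intro prod_lattice_breadth_le) auto
  have "1 \<le> breadth (L 0)"
    using fin[OF \<open>0 < t\<close>] by (rule breadth_ge_1)
  also have "\<dots> \<le> (\<Sum>i<t. breadth (L i))"
    using \<open>0 < t\<close> by (intro member_le_sum) auto
  finally have "1 \<le> (\<Sum>i<t. breadth (L i))" .
  then show "finite_breadth (prod_lattice t L)"
    using upper by (rule finite_breadthI)
  show "breadth (prod_lattice t L) \<le> (\<Sum>i<t. breadth (L i))"
    using \<open>1 \<le> (\<Sum>i<t. breadth (L i))\<close> upper by (rule breadth_least)
qed

lemma sum_breadth_le_breadth_prod_lattice:
  assumes lat: "\<And>i. i < t \<Longrightarrow> lattice (L i)"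
    and nontrivial: "\<And>i. i < t \<Longrightarrow> \<exists>u \<in> carrier (L i). \<exists>v \<in> carrier (L i). u \<noteq> v"
    and fin: "\<And>i. i < t \<Longrightarrow> finite_breadth (L i)"
    and fin_prod: "finite_breadth (prod_lattice t L)"
  shows "(\<Sum>i<t. breadth (L i)) \<le> breadth (prod_lattice t L)"
proof -
  have L: "upper_semilattice (L i)" if "i < t" for i
    using lat[OF that] by (rule lattice.axioms(1))
  have "\<exists>c x I. finite I \<and> card I = breadth (L i) \<and> join_irredundant (L i) c (x :: nat \<Rightarrow> 'a) I"
    if "i < t" for i
    by (rule lattice.join_irredundant_of_breadth[OF lat nontrivial fin, OF that that that]) blast
  then obtain c x I where witness: "\<And>i. i < t \<Longrightarrow> finite (I i)"
    "\<And>i. i < t \<Longrightarrow> card (I i) = breadth (L i)"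
    "\<And>i. i < t \<Longrightarrow> join_irredundant (L i) (c i) (x i :: nat \<Rightarrow> 'a) (I i)"
    by metis
  have "(\<Sum>i<t. breadth (L i)) = card (SIGMA i:{..<t}. I i)"
    using witness(1,2) by simp
  also have "\<dots> \<le> breadth (prod_lattice t L)"
  proof (rule upper_semilattice.join_irredundant_card_le)
    show "upper_semilattice (prod_lattice t L)"
      using L by (rule upper_semilattice_prod_lattice)
    show "breadth_le (prod_lattice t L) (breadth (prod_lattice t L))" "1 \<le> breadth (prod_lattice t L)"
      using breadth_le_breadth[OF fin_prod] breadth_ge_1[OF fin_prod] .
    show "finite (SIGMA i:{..<t}. I i)"
      using witness(1) by auto
    show "join_irredundant (prod_lattice t L) (\<lambda>k\<in>{..<t}. c k)
        (\<lambda>(i, j). \<lambda>k\<in>{..<t}. if k = i then x i j else c k) (SIGMA i:{..<t}. I i)"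
      using L witness(1,3) by (rule prod_lattice_join_irredundant)
  qed
  finally show ?thesis .
qed

theorem lemma2p2:
  fixes t :: nat and L :: "nat \<Rightarrow> 'a gorder"
  assumes "t \<ge> 2"
    and "\<And>i. i < t \<Longrightarrow> lattice (L i)"
    and "\<And>i. i < t \<Longrightarrow> \<exists>x \<in> carrier (L i). \<exists>y \<in> carrier (L i). x \<noteq> y"
    and "\<And>i. i < t \<Longrightarrow> finite_breadth (L i)"
  shows "breadth (prod_lattice t L) = (\<Sum>i<t. breadth (L i))"
proof -
  have "0 < t"
    using assms(1) by simp
  have L: "upper_semilattice (L i)" if "i < t" for i
    using assms(2)[OF that] by (rule lattice.axioms(1))
  have "finite_breadth (prod_lattice t L)"
    using \<open>0 < t\<close> L assms(4) by (rule finite_breadth_prod_lattice(1))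
  moreover have "breadth (prod_lattice t L) \<le> (\<Sum>i<t. breadth (L i))"
    using \<open>0 < t\<close> L assms(4) by (rule finite_breadth_prod_lattice(2))
  moreover have "(\<Sum>i<t. breadth (L i)) \<le> breadth (prod_lattice t L)"
    using assms(2-4) \<open>finite_breadth (prod_lattice t L)\<close>
    by (rule sum_breadth_le_breadth_prod_lattice)
  ultimately show ?thesis
    by simp
qed

end
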